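(* Suppose a three-link protocol given by maps $s_{AB},s_{AC},s_{BC}$ (and decision functions) solves MEQ-AD$(3,M)$, and let $G(U,V,E)$ be the associated bipartite graph. If $x\neq x'$ and the edges corresponding to $x$ and $x'$ in $G$ are adjacent (share an endpoint), or there is some other edge of $G$ adjacent to both of them, then $s_{BC}(x)\neq s_{BC}(x')$. In other words, $x\mapsto s_{BC}(x)$ is a distance-2 edge coloring of $G$.
   Context: Three nodes $A,B,C$ hold inputs $x_A,x_B,x_C\in\{1,\dots,M\}$. A three-link protocol is given by maps $s_{AB},s_{AC},s_{BC}$ from $\{1,\dots,M\}$ to finite sets: $A$ sends $s_{AB}(x_A)$ to $B$ and $s_{AC}(x_A)$ to $C$, and $B$ sends $s_{BC}(x_B)$ to $C$. Each node outputs a bit: $EQ_A$ is a function of $x_A$, $EQ_B$ a function of $(x_B,s_{AB}(x_A))$, and $EQ_C$ a function of $(x_C,s_{AC}(x_A),s_{BC}(x_B))$. The protocol solves MEQ-AD$(3,M)$ if for all inputs, $EQ_A=EQ_B=EQ_C=0$ holds iff $x_A=x_B=x_C$. The associated bipartite graph $G(U,V,E)$ has vertices $U_i$ for $i$ in the range of $s_{AB}$, $V_j$ for $j$ in the range of $s_{AC}$, and an edge $(U_i,V_j)$ iff $i=s_{AB}(x)$, $j=s_{AC}(x)$ for some $x$; this edge corresponds to $x$ (each edge corresponds to a unique $x$ when the protocol is correct). A distance-2 edge coloring assigns colors to edges so that any two distinct edges that share an endpoint, or are both adjacent to a common third edge, get different colors. *)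

theory Defs
  imports Main
begin

text \<open>Inputs range over {1..M}. Output bits are modelled as bool, True = bit 1,
  False = bit 0. A node "outputs 0" iff its decision function is False.\<close>

definition solves_MEQ_AD3 ::
  "nat \<Rightarrow> (nat \<Rightarrow> 'u) \<Rightarrow> (nat \<Rightarrow> 'v) \<Rightarrow> (nat \<Rightarrow> 'w)
   \<Rightarrow> (nat \<Rightarrow> bool) \<Rightarrow> (nat \<Rightarrow> 'u \<Rightarrow> bool) \<Rightarrow> (nat \<Rightarrow> 'v \<Rightarrow> 'w \<Rightarrow> bool) \<Rightarrow> bool"
where
  "solves_MEQ_AD3 M sAB sAC sBC EQA EQB EQC \<longleftrightarrow>
     (\<forall>xA\<in>{1..M}. \<forall>xB\<in>{1..M}. \<forall>xC\<in>{1..M}.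
        (\<not> EQA xA \<and> \<not> EQB xB (sAB xA) \<and> \<not> EQC xC (sAC xA) (sBC xB))
        \<longleftrightarrow> (xA = xB \<and> xB = xC))"

text \<open>Associated bipartite graph: U-vertices are values of sAB, V-vertices values of sAC;
  the edge corresponding to input x is (U_{sAB x}, V_{sAC x}), represented as a pair.\<close>

definition meq_edge :: "(nat \<Rightarrow> 'u) \<Rightarrow> (nat \<Rightarrow> 'v) \<Rightarrow> nat \<Rightarrow> 'u \<times> 'v" where
  "meq_edge sAB sAC x = (sAB x, sAC x)"

definition meq_edges :: "nat \<Rightarrow> (nat \<Rightarrow> 'u) \<Rightarrow> (nat \<Rightarrow> 'v) \<Rightarrow> ('u \<times> 'v) set" where
  "meq_edges M sAB sAC = meq_edge sAB sAC ` {1..M}"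

definition edges_adjacent :: "'u \<times> 'v \<Rightarrow> 'u \<times> 'v \<Rightarrow> bool" where
  "edges_adjacent e f \<longleftrightarrow> fst e = fst f \<or> snd e = snd f"

end

theory Submission
  imports Defs
begin

text \<open>If \<open>sAB a = sAB b\<close>, \<open>sAC a = sAC c\<close> and \<open>sBC b = sBC c\<close>, then on the input
  triple \<open>(a, b, c)\<close> every node receives exactly what it receives on some all-equal triple,
  so all three output 0 and correctness forces \<open>a = b = c\<close>. Two distinct inputs with equal
  \<open>sBC\<close>-messages whose edges are adjacent, or have a common neighbouring edge, yield such a
  triple of inputs that are not all equal.\<close>

lemma solves_MEQ_AD3_indistinguishable_eq:
  assumes "solves_MEQ_AD3 M sAB sAC sBC EQA EQB EQC"
    and "a \<in> {1..M}" "b \<in> {1..M}" "c \<in> {1..M}"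
    and "sAB a = sAB b" "sAC a = sAC c" "sBC b = sBC c"
  shows "a = b \<and> b = c"
proof -
  have correct: "\<And>xA xB xC. \<lbrakk>xA \<in> {1..M}; xB \<in> {1..M}; xC \<in> {1..M}\<rbrakk> \<Longrightarrow>
      (\<not> EQA xA \<and> \<not> EQB xB (sAB xA) \<and> \<not> EQC xC (sAC xA) (sBC xB)) \<longleftrightarrow> xA = xB \<and> xB = xC"
    using assms(1) unfolding solves_MEQ_AD3_def by blast
  have "\<not> EQA a"
    using correct[OF assms(2) assms(2) assms(2)] by simp
  moreover have "\<not> EQB b (sAB a)"
    using correct[OF assms(3) assms(3) assms(3)] assms(5) by simp
  moreover have "\<not> EQC c (sAC a) (sBC b)"
    using correct[OF assms(4) assms(4) assms(4)] assms(6,7) by simp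
  ultimately show ?thesis
    using correct[OF assms(2-4)] by simp
qed

lemma solves_MEQ_AD3_adjacent_sBC_eq:
  assumes "solves_MEQ_AD3 M sAB sAC sBC EQA EQB EQC"
    and "x \<in> {1..M}" "x' \<in> {1..M}" "sBC x = sBC x'"
    and "sAB x = sAB x' \<or> sAC x = sAC x'"
  shows "x = x'"
  using assms(5)
proof
  assume "sAB x = sAB x'"
  from solves_MEQ_AD3_indistinguishable_eq[OF assms(1,3,2,3) this[symmetric] refl assms(4)]
  show ?thesis by blast
next
  assume "sAC x = sAC x'"
  from solves_MEQ_AD3_indistinguishable_eq[OF assms(1,2,2,3) refl this assms(4)]
  show ?thesis by blast
qed

lemma solves_MEQ_AD3_common_neighbour_sBC_eq:
  assumes "solves_MEQ_AD3 M sAB sAC sBC EQA EQB EQC"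
    and "x \<in> {1..M}" "x' \<in> {1..M}" "y \<in> {1..M}" "sBC x = sBC x'"
    and "sAB y = sAB x \<or> sAC y = sAC x" "sAB y = sAB x' \<or> sAC y = sAC x'"
  shows "x = x'"
  using assms(6,7)
proof (elim disjE)
  assume "sAB y = sAB x" "sAB y = sAB x'"
  then show ?thesis
    by (intro solves_MEQ_AD3_adjacent_sBC_eq[OF assms(1-3,5)]) simp
next
  assume "sAB y = sAB x" "sAC y = sAC x'"
  from solves_MEQ_AD3_indistinguishable_eq[OF assms(1,4,2,3) this assms(5)]
  show ?thesis by blast
next
  assume "sAC y = sAC x" "sAB y = sAB x'"
  from solves_MEQ_AD3_indistinguishable_eq[OF assms(1,4,3,2) this(2,1) assms(5)[symmetric]]
  show ?thesis by blast
next
  assume "sAC y = sAC x" "sAC y = sAC x'"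
  then show ?thesis
    by (intro solves_MEQ_AD3_adjacent_sBC_eq[OF assms(1-3,5)]) simp
qed

theorem lemma4:
  fixes M :: nat
    and sAB :: "nat \<Rightarrow> 'u" and sAC :: "nat \<Rightarrow> 'v" and sBC :: "nat \<Rightarrow> 'w"
    and EQA :: "nat \<Rightarrow> bool" and EQB :: "nat \<Rightarrow> 'u \<Rightarrow> bool"
    and EQC :: "nat \<Rightarrow> 'v \<Rightarrow> 'w \<Rightarrow> bool"
    and x x' :: nat
  assumes "solves_MEQ_AD3 M sAB sAC sBC EQA EQB EQC"
    and "x \<in> {1..M}" and "x' \<in> {1..M}" and "x \<noteq> x'"
    and "edges_adjacent (meq_edge sAB sAC x) (meq_edge sAB sAC x')
         \<or> (\<exists>e\<in>meq_edges M sAB sAC.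
              e \<noteq> meq_edge sAB sAC x \<and> e \<noteq> meq_edge sAB sAC x'
              \<and> edges_adjacent e (meq_edge sAB sAC x)
              \<and> edges_adjacent e (meq_edge sAB sAC x'))"
  shows "sBC x \<noteq> sBC x'"
proof
  assume same: "sBC x = sBC x'"
  from assms(5) show False
  proof
    assume "edges_adjacent (meq_edge sAB sAC x) (meq_edge sAB sAC x')"
    then show False
      using solves_MEQ_AD3_adjacent_sBC_eq[OF assms(1-3) same] assms(4)
      by (simp add: edges_adjacent_def meq_edge_def)
  next
    assume "\<exists>e\<in>meq_edges M sAB sAC. e \<noteq> meq_edge sAB sAC x \<and> e \<noteq> meq_edge sAB sAC x'
              \<and> edges_adjacent e (meq_edge sAB sAC x) \<and> edges_adjacent e (meq_edge sAB sAC x')"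
    then obtain y where "y \<in> {1..M}"
      and "sAB y = sAB x \<or> sAC y = sAC x" and "sAB y = sAB x' \<or> sAC y = sAC x'"
      by (auto simp: meq_edges_def edges_adjacent_def meq_edge_def)
    with solves_MEQ_AD3_common_neighbour_sBC_eq[OF assms(1-3) _ same] assms(4) show False
      by blast
  qed
qed

end
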